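(* Assume (A1)–(A3) below and let $\mu>0$, $\eta>0$. Then: (i) For all $y,w\in\mathbb{R}^n$, $$\big(\|\hat x^\eta_1(y)-\hat x^\eta_1(w)\|,\dots,\|\hat x^\eta_N(y)-\hat x^\eta_N(w)\|\big)^\top\le\Gamma_1\big(\|y_1-w_1\|,\dots,\|y_N-w_N\|\big)^\top$$ componentwise; consequently $\hat x^\eta$ is a contraction with respect to the norm $\|x\|_\ast\triangleq\|(\|x_1\|,\dots,\|x_N\|)\|_2$ and has a unique fixed point $x^*$. (ii) A point $x^*$ is a fixed point of $\hat x^\eta$ if and only if it is a Nash equilibrium of the game; hence the game has a unique Nash equilibrium. (iii) If the tolerances satisfy $\varepsilon_i^k\ge0$ and $\sum_{k=0}^\infty\varepsilon_i^k<\infty$ for every $i$, then the MS-SBR iterates satisfy $x^k\to x^*$ almost surely. Assumptions: (A1) for each $i$ and each $x_{-i}$, $f_i(\cdot,x_{-i})$ is $\sigma_i$-strongly convex ($\sigma_i>0$) and continuous; (A2) for each $i$ and each $x_i$, $\|\nabla_{x_i}\bar f_i^\eta(x_i,y_{-i})-\nabla_{x_i}\bar f_i^\eta(x_i,w_{-i})\|\le\bar L_{-i}\|y_{-i}-w_{-i}\|$ for all $y_{-i},w_{-i}$; (A3) the spectral norm of $\Gamma_1$ satisfies $\|\Gamma_1\|<1$.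
   Context: $N$-player game: player $i$ has nonempty closed convex $X_i\subseteq\mathbb{R}^{n_i}$ and real-valued objective $f_i:\mathbb{R}^{n}\to\mathbb{R}$ (with $n=\sum_in_i$, $x=(x_i,x_{-i})$), $f_i(x)=\mathbb{E}[\tilde f_i(x,\boldsymbol\xi)]$; $X=\prod_iX_i$. A Nash equilibrium is $x^*\in X$ with $f_i(x_i^*,x_{-i}^* )\le f_i(x_i,x^*_{-i})$ for all $x_i\in X_i$, all $i$. Let $\bar f_i(\cdot,x_{-i})=f_i(\cdot,x_{-i})+\mathbf{1}_{X_i}$ (indicator of $X_i$) and $\bar f_i^\eta(x_i,x_{-i})=\min_{y}\{\bar f_i(y,x_{-i})+\frac1{2\eta}\|y-x_i\|^2\}$ its Moreau envelope in $x_i$. Best-response map: $\hat x^\eta_i(x)\triangleq\operatorname*{argmin}_{z\in\mathbb{R}^{n_i}}\{\bar f_i^\eta(z,x_{-i})+\frac\mu2\|z-x_i\|^2\}$, $\hat x^\eta=(\hat x^\eta_i)_{i=1}^N$. The matrix $\Gamma_1\in\mathbb{R}^{N\times N}$ has entries $(\Gamma_1)_{ii}=\frac{\mu}{\sigma_i/(\eta\sigma_i+1)+\mu}$ and $(\Gamma_1)_{ij}=\frac{\bar L_{-i}}{\sigma_i/(\eta\sigma_i+1)+\mu}$ for $j\ne i$. MS-SBR: given $x^0\in X$ and tolerances $\varepsilon_i^k\ge0$, at each iteration $k$ every player $i$ produces a random $x_i^{k+1}\in X_i$ with $\mathbb{E}[\|x_i^{k+1}-\hat x_i^\eta(x^k)\|^2\mid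 x^k]\le(\varepsilon_i^k)^2$ a.s. *)

theory Defs
  imports "HOL-Analysis.Analysis" "HOL-Probability.Probability"
begin

text \<open>Players are the elements of a finite type 'p, coordinates of R^n are the elements
of a finite type 'n, and blk j is the player owning coordinate j.  Player i's space
R^(n_i) is identified with the coordinate subspace bsub blk i.\<close>

definition bsub :: "('n::finite \<Rightarrow> 'p) \<Rightarrow> 'p \<Rightarrow> (real^'n) set" where
  "bsub blk i = {v. \<forall>j. blk j \<noteq> i \<longrightarrow> v $ j = 0}"

definition bproj :: "('n::finite \<Rightarrow> 'p) \<Rightarrow> 'p \<Rightarrow> real^'n \<Rightarrow> real^'n" where
  "bproj blk i x = (\<chi> j. if blk j = i then x $ j else 0)"

definition bothers :: "('n::finite \<Rightarrow> 'p) \<Rightarrow> 'p \<Rightarrow> real^'n \<Rightarrow> real^'n" where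
  "bothers blk i x = (\<chi> j. if blk j = i then 0 else x $ j)"

definition bupd :: "('n::finite \<Rightarrow> 'p) \<Rightarrow> 'p \<Rightarrow> real^'n \<Rightarrow> real^'n \<Rightarrow> real^'n" where
  "bupd blk i z x = (\<chi> j. if blk j = i then z $ j else x $ j)"

definition starnorm :: "('n::finite \<Rightarrow> 'p::finite) \<Rightarrow> real^'n \<Rightarrow> real" where
  "starnorm blk x = norm (\<chi> i. norm (bproj blk i x))"

text \<open>sigma-strong convexity (convention: f - sigma/2 ||.||^2 convex)\<close>
definition strongly_convex_on :: "'a::real_normed_vector set \<Rightarrow> ('a \<Rightarrow> real) \<Rightarrow> real \<Rightarrow> bool" where
  "strongly_convex_on S f \<sigma> \<longleftrightarrow> convex S \<and>
     (\<forall>x\<in>S. \<forall>y\<in>S. \<forall>t::real. 0 \<le> t \<and> t \<le> 1 \<longrightarrow>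
        f (t *\<^sub>R x + (1 - t) *\<^sub>R y) \<le> t * f x + (1 - t) * f y - \<sigma> / 2 * t * (1 - t) * (norm (x - y))\<^sup>2)"

text \<open>Moreau envelope of f_i(.,x_{-i}) + indicator of X_i, evaluated at (x_i, x_{-i})\<close>
definition moreau :: "('n::finite \<Rightarrow> 'p) \<Rightarrow> ('p \<Rightarrow> real^'n \<Rightarrow> real) \<Rightarrow> ('p \<Rightarrow> (real^'n) set)
    \<Rightarrow> real \<Rightarrow> 'p \<Rightarrow> real^'n \<Rightarrow> real" where
  "moreau blk f Xs \<eta> i x =
     (INF y\<in>Xs i. f i (bupd blk i y x) + 1 / (2 * \<eta>) * (norm (y - bproj blk i x))\<^sup>2)"

definition bresp :: "('n::finite \<Rightarrow> 'p) \<Rightarrow> ('p \<Rightarrow> real^'n \<Rightarrow> real) \<Rightarrow> ('p \<Rightarrow> (real^'n) set)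
    \<Rightarrow> real \<Rightarrow> real \<Rightarrow> 'p \<Rightarrow> real^'n \<Rightarrow> real^'n" where
  "bresp blk f Xs \<eta> \<mu> i x =
     (THE z. z \<in> bsub blk i \<and>
        (\<forall>z'\<in>bsub blk i.
           moreau blk f Xs \<eta> i (bupd blk i z x) + \<mu> / 2 * (norm (z - bproj blk i x))\<^sup>2
           \<le> moreau blk f Xs \<eta> i (bupd blk i z' x) + \<mu> / 2 * (norm (z' - bproj blk i x))\<^sup>2))"

definition xhat :: "('n::finite \<Rightarrow> 'p) \<Rightarrow> ('p \<Rightarrow> real^'n \<Rightarrow> real) \<Rightarrow> ('p \<Rightarrow> (real^'n) set)
    \<Rightarrow> real \<Rightarrow> real \<Rightarrow> real^'n \<Rightarrow> real^'n" where
  "xhat blk f Xs \<eta> \<mu> x = (\<chi> j. bresp blk f Xs \<eta> \<mu> (blk j) x $ j)"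

definition Gamma1 :: "real \<Rightarrow> real \<Rightarrow> ('p::finite \<Rightarrow> real) \<Rightarrow> ('p \<Rightarrow> real) \<Rightarrow> real^'p^'p" where
  "Gamma1 \<eta> \<mu> \<sigma> L = (\<chi> i j. if i = j then \<mu> / (\<sigma> i / (\<eta> * \<sigma> i + 1) + \<mu>)
                               else L i / (\<sigma> i / (\<eta> * \<sigma> i + 1) + \<mu>))"

definition nash :: "('n::finite \<Rightarrow> 'p) \<Rightarrow> ('p \<Rightarrow> real^'n \<Rightarrow> real) \<Rightarrow> ('p \<Rightarrow> (real^'n) set)
    \<Rightarrow> real^'n \<Rightarrow> bool" where
  "nash blk f Xs x \<longleftrightarrow> (\<forall>i. bproj blk i x \<in> Xs i) \<and>
     (\<forall>i. \<forall>z\<in>Xs i. f i x \<le> f i (bupd blk i z x))"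

end

theory Submission
  imports Defs
begin

text \<open>Player i's best response is a proximal step, with weight \<mu>, on the Moreau envelope of
  f_i(., x_{-i}) + 1_{X_i}. This envelope is \<sigma>_i/(\<eta>\<sigma>_i + 1)-strongly convex, and minimisers of two
  c-strongly convex functions whose difference is K-Lipschitz lie within K/c of each other; for the
  objectives at y and w, (A2) gives K = \<mu>|y_i - w_i| + L_{-i}|y_{-i} - w_{-i}|, which is the row
  bound with Gamma1. Since the star norm is the Euclidean norm, (A3) makes the best-response map a
  contraction. A proximal step fixes x_i exactly when x_i minimises the envelope, i.e. minimises
  f_i(., x_{-i}) on X_i, so the fixed points are the Nash equilibria. Finally the conditional error
  bounds give E|x_i^{k+1} - hat x_i(x^k)| \<le> \<epsilon>_i^k, so the errors are almost surely summable, and a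
  contraction iterated with summable errors converges to its fixed point.\<close>

section \<open>Block coordinates\<close>

lemma bproj_in_bsub [simp]: "bproj blk i x \<in> bsub blk i"
  by (simp add: bproj_def bsub_def)

lemma bproj_bsub: "z \<in> bsub blk i \<Longrightarrow> bproj blk i z = z"
  by (auto simp: bproj_def bsub_def vec_eq_iff)

lemma bproj_bupd [simp]: "bproj blk i (bupd blk i z x) = bproj blk i z"
  by (auto simp: bproj_def bupd_def vec_eq_iff)

lemma bupd_bupd [simp]: "bupd blk i y (bupd blk i z x) = bupd blk i y x"
  by (auto simp: bupd_def vec_eq_iff)

lemma bupd_bproj_self [simp]: "bupd blk i (bproj blk i x) x = x"
  by (auto simp: bproj_def bupd_def vec_eq_iff)

lemma bproj_diff: "bproj blk i (x - y) = bproj blk i x - bproj blk i y"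
  by (auto simp: bproj_def vec_eq_iff)

lemma bothers_diff: "bothers blk i (x - y) = bothers blk i x - bothers blk i y"
  by (auto simp: bothers_def vec_eq_iff)

lemma continuous_on_bproj: "continuous_on S (bproj blk i)"
  unfolding bproj_def
proof (intro continuous_on_vec_lambda)
  show "continuous_on S (\<lambda>x. if blk j = i then x $ j else 0)" for j
    by (cases "blk j = i") (simp_all add: continuous_on_component continuous_on_id)
qed

lemma closed_bsub: "closed (bsub blk i)"
proof -
  have "bsub blk i = (\<Inter>j\<in>{j. blk j \<noteq> i}. {v. v $ j = 0})"
    by (auto simp: bsub_def)
  moreover have "closed {v::real^'n. v $ j = 0}" for j
    by (intro closed_Collect_eq continuous_intros)
  ultimately show ?thesis by auto
qed

lemma convex_bsub: "convex (bsub blk i)"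
  unfolding convex_def bsub_def by auto

lemma sum_bproj:
  fixes blk :: "'n::finite \<Rightarrow> 'p::finite"
  shows "(\<Sum>i\<in>A. bproj blk i x) = (\<chi> j. if blk j \<in> A then x $ j else 0)"
  by (simp add: vec_eq_iff bproj_def sum_component sum.delta')

lemma norm_le_sum_norm_bproj:
  fixes blk :: "'n::finite \<Rightarrow> 'p::finite"
  shows "norm x \<le> (\<Sum>i\<in>UNIV. norm (bproj blk i x))"
  using norm_sum[of "\<lambda>i. bproj blk i x" UNIV] by (simp add: sum_bproj vec_eq_iff)

lemma norm_bothers_le:
  fixes blk :: "'n::finite \<Rightarrow> 'p::finite"
  shows "norm (bothers blk i x) \<le> (\<Sum>j\<in>UNIV-{i}. norm (bproj blk j x))"
proof -
  have "bothers blk i x = (\<Sum>j\<in>UNIV-{i}. bproj blk j x)"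
    by (simp add: sum_bproj bothers_def vec_eq_iff)
  then show ?thesis by (simp add: norm_sum)
qed

lemma sum_power2_norm_bproj:
  fixes blk :: "'n::finite \<Rightarrow> 'p::finite"
  shows "(\<Sum>i\<in>UNIV. (norm (bproj blk i x))\<^sup>2) = (norm x)\<^sup>2"
proof -
  have "(norm (bproj blk i x))\<^sup>2 = (\<Sum>k\<in>UNIV. if blk k = i then (x $ k)\<^sup>2 else 0)" for i
    unfolding norm_vec_def L2_set_def
    by (subst real_sqrt_pow2) (auto intro!: sum_nonneg sum.cong simp: bproj_def)
  then have "(\<Sum>i\<in>UNIV. (norm (bproj blk i x))\<^sup>2)
      = (\<Sum>i\<in>UNIV. \<Sum>k\<in>UNIV. if blk k = i then (x $ k)\<^sup>2 else 0)"
    by simp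
  also have "\<dots> = (\<Sum>k\<in>UNIV. \<Sum>i\<in>UNIV. if blk k = i then (x $ k)\<^sup>2 else 0)"
    by (rule sum.swap)
  also have "\<dots> = (norm x)\<^sup>2"
    unfolding norm_vec_def L2_set_def by (simp add: sum.delta' sum_nonneg)
  finally show ?thesis .
qed

lemma starnorm_eq_norm: "starnorm blk x = norm x"
proof -
  have "(starnorm blk x)\<^sup>2 = (\<Sum>i\<in>UNIV. (norm (bproj blk i x))\<^sup>2)"
    unfolding starnorm_def norm_vec_def L2_set_def by (simp add: sum_nonneg)
  then show ?thesis
    by (simp add: sum_power2_norm_bproj starnorm_def power2_eq_iff_nonneg)
qed

section \<open>Strong convexity\<close>

lemma nonpos_of_forall_le_mult:
  fixes x C :: real
  assumes "\<And>t. 0 < t \<Longrightarrow> t \<le> 1 \<Longrightarrow> x \<le> t * C"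
  shows "x \<le> 0"
proof (rule field_le_epsilon)
  fix e :: real assume "0 < e"
  define t where "t = min 1 (e / (\<bar>C\<bar> + 1))"
  have t: "0 < t" "t \<le> 1"
    using \<open>0 < e\<close> by (auto simp: t_def)
  have "t * (\<bar>C\<bar> + 1) \<le> e / (\<bar>C\<bar> + 1) * (\<bar>C\<bar> + 1)"
    by (intro mult_right_mono) (auto simp: t_def)
  then have "t * (\<bar>C\<bar> + 1) \<le> e" by simp
  have "x \<le> t * C" using assms t by blast
  also have "\<dots> \<le> t * (\<bar>C\<bar> + 1)" using t by (intro mult_left_mono) auto
  finally show "x \<le> 0 + e" using \<open>t * (\<bar>C\<bar> + 1) \<le> e\<close> by simp
qed

lemma strongly_convex_on_subset:
  "strongly_convex_on S f c \<Longrightarrow> T \<subseteq> S \<Longrightarrow> convex T \<Longrightarrow> strongly_convex_on T f c"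
  unfolding strongly_convex_on_def by blast

lemma strongly_convex_on_add:
  assumes f: "strongly_convex_on S f a" and g: "strongly_convex_on S g b"
  shows "strongly_convex_on S (\<lambda>x. f x + g x) (a + b)"
  unfolding strongly_convex_on_def
proof (intro conjI ballI allI impI)
  show "convex S" using f by (simp add: strongly_convex_on_def)
  fix x y and t :: real
  assume "x \<in> S" "y \<in> S" "0 \<le> t \<and> t \<le> 1"
  then have "f (t *\<^sub>R x + (1 - t) *\<^sub>R y)
      \<le> t * f x + (1 - t) * f y - a / 2 * t * (1 - t) * (norm (x - y))\<^sup>2"
    and "g (t *\<^sub>R x + (1 - t) *\<^sub>R y)
      \<le> t * g x + (1 - t) * g y - b / 2 * t * (1 - t) * (norm (x - y))\<^sup>2"
    using f g unfolding strongly_convex_on_def by blast+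
  then show "f (t *\<^sub>R x + (1 - t) *\<^sub>R y) + g (t *\<^sub>R x + (1 - t) *\<^sub>R y)
    \<le> t * (f x + g x) + (1 - t) * (f y + g y) - (a + b) / 2 * t * (1 - t) * (norm (x - y))\<^sup>2"
    by (simp add: algebra_simps add_divide_distrib)
qed

lemma strongly_convex_on_imp_convex_on:
  assumes sc: "strongly_convex_on S f c" and "0 \<le> c"
  shows "convex_on S f"
proof (rule convex_onI)
  show "convex S" using sc by (simp add: strongly_convex_on_def)
  fix t :: real and x y assume "0 < t" "t < 1" "x \<in> S" "y \<in> S"
  then have "f ((1 - t) *\<^sub>R x + t *\<^sub>R y)
      \<le> (1 - t) * f x + t * f y - c / 2 * (1 - t) * t * (norm (x - y))\<^sup>2"
    using sc[unfolded strongly_convex_on_def, THEN conjunct2, rule_format, of x y "1 - t"]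
    by simp
  moreover have "0 \<le> c / 2 * (1 - t) * t * (norm (x - y))\<^sup>2"
    using \<open>0 \<le> c\<close> \<open>0 < t\<close> \<open>t < 1\<close> by simp
  ultimately show "f ((1 - t) *\<^sub>R x + t *\<^sub>R y) \<le> (1 - t) * f x + t * f y"
    by linarith
qed

lemma power2_norm_convex_combination:
  fixes u v :: "'a::real_inner"
  shows "(norm (t *\<^sub>R u + (1 - t) *\<^sub>R v))\<^sup>2
    = t * (norm u)\<^sup>2 + (1 - t) * (norm v)\<^sup>2 - t * (1 - t) * (norm (u - v))\<^sup>2"
  unfolding power2_norm_eq_inner
  by (simp add: inner_add_left inner_add_right inner_diff_left inner_diff_right inner_commute
      algebra_simps)

lemma strongly_convex_on_power2_dist:
  fixes p :: "'a::real_inner"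
  assumes "convex S"
  shows "strongly_convex_on S (\<lambda>z. a / 2 * (norm (z - p))\<^sup>2) a"
  unfolding strongly_convex_on_def
proof (intro conjI ballI allI impI assms)
  fix x y :: 'a and t :: real
  have "t *\<^sub>R x + (1 - t) *\<^sub>R y - p = t *\<^sub>R (x - p) + (1 - t) *\<^sub>R (y - p)"
    by (simp add: algebra_simps)
  then have sq: "(norm (t *\<^sub>R x + (1 - t) *\<^sub>R y - p))\<^sup>2
      = t * (norm (x - p))\<^sup>2 + (1 - t) * (norm (y - p))\<^sup>2 - t * (1 - t) * (norm (x - y))\<^sup>2"
    by (simp add: power2_norm_convex_combination)
  then show "a / 2 * (norm (t *\<^sub>R x + (1 - t) *\<^sub>R y - p))\<^sup>2 \<le> t * (a / 2 * (norm (x - p))\<^sup>2)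
      + (1 - t) * (a / 2 * (norm (y - p))\<^sup>2) - a / 2 * t * (1 - t) * (norm (x - y))\<^sup>2"
    by (simp only: sq) (simp add: field_simps)
qed

lemma strongly_convex_on_argmin_growth:
  assumes sc: "strongly_convex_on S f c" and "0 \<le> c"
    and z: "z \<in> S" and m: "m \<in> S" and min: "\<And>y. y \<in> S \<Longrightarrow> f m \<le> f y"
  shows "f m + c / 2 * (norm (z - m))\<^sup>2 \<le> f z"
proof -
  have "c / 2 * (norm (z - m))\<^sup>2 - (f z - f m) \<le> 0"
  proof (rule nonpos_of_forall_le_mult)
    fix t :: real assume t: "0 < t" "t \<le> 1"
    have "t *\<^sub>R z + (1 - t) *\<^sub>R m \<in> S"
      using sc z m t by (auto simp: strongly_convex_on_def intro: convexD)
    then have "f m \<le> f (t *\<^sub>R z + (1 - t) *\<^sub>R m)" by (rule min)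
    also have "\<dots> \<le> t * f z + (1 - t) * f m - c / 2 * t * (1 - t) * (norm (z - m))\<^sup>2"
      using sc z m t unfolding strongly_convex_on_def by auto
    finally have "t * (c / 2 * (norm (z - m))\<^sup>2 * (1 - t)) \<le> t * (f z - f m)"
      by (simp add: algebra_simps)
    then have "c / 2 * (norm (z - m))\<^sup>2 * (1 - t) \<le> f z - f m"
      using t by simp
    moreover have "c / 2 * (norm (z - m))\<^sup>2 * (1 - t)
        = c / 2 * (norm (z - m))\<^sup>2 - t * (c / 2 * (norm (z - m))\<^sup>2)"
      by (simp add: right_diff_distrib)
    ultimately show "c / 2 * (norm (z - m))\<^sup>2 - (f z - f m) \<le> t * (c / 2 * (norm (z - m))\<^sup>2)"
      by linarith
  qed
  then show ?thesis by simp
qed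

text \<open>Coercivity: strong convexity is applied at the point of the segment [p, y] at distance 1
  from p, where f is at least m.\<close>
lemma strongly_convex_on_center_le_far:
  assumes sc: "strongly_convex_on S f c" and "0 < c"
    and p: "p \<in> S" and m: "\<And>y. y \<in> S \<Longrightarrow> dist p y \<le> 1 \<Longrightarrow> m \<le> f y"
    and y: "y \<in> S" and far: "1 + 2 * (f p - m) / c \<le> norm (y - p)"
  shows "f p \<le> f y"
proof -
  define R where "R = norm (y - p)"
  have "0 \<le> 2 * (f p - m) / c" using m[OF p] \<open>0 < c\<close> by simp
  then have "1 \<le> R" using far by (simp add: R_def)
  define t where "t = 1 / R"
  have t: "0 < t" "t \<le> 1" using \<open>1 \<le> R\<close> by (auto simp: t_def)
  have "t *\<^sub>R y + (1 - t) *\<^sub>R p \<in> S"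
    using sc y p t by (auto simp: strongly_convex_on_def intro: convexD)
  moreover have "dist p (t *\<^sub>R y + (1 - t) *\<^sub>R p) = 1"
    using \<open>1 \<le> R\<close>
    by (auto simp: dist_norm t_def R_def algebra_simps norm_minus_commute simp flip: scaleR_diff_right)
  ultimately have "m \<le> f (t *\<^sub>R y + (1 - t) *\<^sub>R p)" using m by simp
  also have "\<dots> \<le> t * f y + (1 - t) * f p - c / 2 * t * (1 - t) * R\<^sup>2"
    using sc y p t unfolding strongly_convex_on_def R_def by auto
  finally have "R * m \<le> R * (t * f y + (1 - t) * f p - c / 2 * t * (1 - t) * R\<^sup>2)"
    using \<open>1 \<le> R\<close> by simp
  also have "\<dots> = f y + (R - 1) * f p - c / 2 * (R - 1) * R"
    using \<open>1 \<le> R\<close> by (simp add: t_def field_simps power2_eq_square)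
  finally have "f p + R * (c / 2 * (R - 1) - (f p - m)) \<le> f y"
    by (simp add: algebra_simps)
  moreover have "f p - m \<le> c / 2 * (R - 1)"
    using far \<open>0 < c\<close> by (simp add: R_def field_simps)
  moreover have "0 \<le> R * (c / 2 * (R - 1) - (f p - m))"
    using \<open>1 \<le> R\<close> calculation(2) by simp
  ultimately show ?thesis by linarith
qed

lemma strongly_convex_on_attains_inf:
  fixes f :: "'a::{real_normed_vector,heine_borel} \<Rightarrow> real"
  assumes sc: "strongly_convex_on S f c" and "0 < c"
    and "closed S" and "S \<noteq> {}" and cont: "continuous_on S f"
  shows "\<exists>m\<in>S. \<forall>y\<in>S. f m \<le> f y"
proof -
  obtain p where p: "p \<in> S" using \<open>S \<noteq> {}\<close> by blast
  have "compact (S \<inter> cball p r)" for r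
    using \<open>closed S\<close> by (simp add: closed_Int_compact)
  then have argmin_ball: "\<exists>z\<in>S \<inter> cball p r. \<forall>y\<in>S \<inter> cball p r. f z \<le> f y" if "0 \<le> r" for r
    using p that by (intro continuous_attains_inf continuous_on_subset[OF cont]) auto
  obtain q where "q \<in> S \<inter> cball p 1" and q: "\<And>y. y \<in> S \<Longrightarrow> dist p y \<le> 1 \<Longrightarrow> f q \<le> f y"
    using argmin_ball[of 1] by auto
  define R where "R = 1 + 2 * (f p - f q) / c"
  have "0 \<le> R" using q[OF p] \<open>0 < c\<close> by (simp add: R_def)
  then obtain z where z: "z \<in> S \<inter> cball p R" and zmin: "\<And>y. y \<in> S \<inter> cball p R \<Longrightarrow> f z \<le> f y"
    using argmin_ball by blast
  have "f z \<le> f y" if "y \<in> S" for y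
  proof (cases "dist p y \<le> R")
    case True
    then show ?thesis using zmin that by simp
  next
    case False
    then have "f p \<le> f y"
      using strongly_convex_on_center_le_far[OF sc \<open>0 < c\<close> p q that]
      by (simp add: R_def dist_norm norm_minus_commute)
    moreover have "f z \<le> f p" using zmin p \<open>0 \<le> R\<close> by simp
    ultimately show ?thesis by simp
  qed
  then show ?thesis using z by blast
qed

lemma strongly_convex_on_ex1_argmin:
  fixes f :: "'a::{real_normed_vector,heine_borel} \<Rightarrow> real"
  assumes sc: "strongly_convex_on S f c" and "0 < c"
    and "closed S" and "S \<noteq> {}" and "continuous_on S f"
  shows "\<exists>!m. m \<in> S \<and> (\<forall>y\<in>S. f m \<le> f y)"
proof -
  obtain m where m: "m \<in> S" "\<forall>y\<in>S. f m \<le> f y"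
    using strongly_convex_on_attains_inf[OF assms] by blast
  have "z = m" if "z \<in> S" "\<forall>y\<in>S. f z \<le> f y" for z
  proof -
    have "f m + c / 2 * (norm (z - m))\<^sup>2 \<le> f z"
      using strongly_convex_on_argmin_growth[OF sc _ \<open>z \<in> S\<close> m(1)] m \<open>0 < c\<close> by simp
    then have "c / 2 * (norm (z - m))\<^sup>2 \<le> 0" using that(2) m(1) by fastforce
    then show "z = m" using \<open>0 < c\<close> by (simp add: mult_le_0_iff)
  qed
  then show ?thesis using m by blast
qed

text \<open>Adding the two quadratic-growth inequalities at the two minimisers isolates the increment
  of the difference f - g.\<close>
lemma strongly_convex_on_argmin_dist_le:
  assumes f: "strongly_convex_on S f c" and g: "strongly_convex_on S g c" and "0 < c"
    and mf: "mf \<in> S" "\<And>y. y \<in> S \<Longrightarrow> f mf \<le> f y"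
    and mg: "mg \<in> S" "\<And>y. y \<in> S \<Longrightarrow> g mg \<le> g y"
    and lip: "K-lipschitz_on S (\<lambda>z. f z - g z)"
  shows "c * dist mf mg \<le> K"
proof -
  define d where "d = dist mf mg"
  have "f mf + c / 2 * d\<^sup>2 \<le> f mg"
    using strongly_convex_on_argmin_growth[OF f _ mg(1) mf] \<open>0 < c\<close>
    by (simp add: d_def dist_norm norm_minus_commute)
  moreover have "g mg + c / 2 * d\<^sup>2 \<le> g mf"
    using strongly_convex_on_argmin_growth[OF g _ mf(1) mg] \<open>0 < c\<close> by (simp add: d_def dist_norm)
  moreover have "(f mg - g mg) - (f mf - g mf) \<le> K * d"
    using lipschitz_onD[OF lip mg(1) mf(1)] by (simp add: d_def dist_real_def dist_commute)
  ultimately have "(c * d) * d \<le> K * d"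
    by (simp add: power2_eq_square algebra_simps)
  moreover have "0 \<le> K" using lip by (rule lipschitz_on_nonneg)
  ultimately show ?thesis
    by (cases "d = 0") (auto simp: d_def)
qed

lemma lipschitz_on_power2_dist_diff:
  fixes a b :: "'a::real_inner"
  assumes "0 \<le> c"
  shows "(c * norm (a - b))-lipschitz_on S (\<lambda>z. c / 2 * (norm (z - a))\<^sup>2 - c / 2 * (norm (z - b))\<^sup>2)"
proof (rule lipschitz_onI)
  fix z1 z2 :: 'a
  have "(c / 2 * (norm (z1 - a))\<^sup>2 - c / 2 * (norm (z1 - b))\<^sup>2)
      - (c / 2 * (norm (z2 - a))\<^sup>2 - c / 2 * (norm (z2 - b))\<^sup>2) = c * ((z1 - z2) \<bullet> (b - a))"
    unfolding power2_norm_eq_inner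
    by (simp add: inner_diff_left inner_diff_right inner_commute algebra_simps)
  also have "\<bar>\<dots>\<bar> \<le> c * (norm (a - b) * norm (z1 - z2))"
    using Cauchy_Schwarz_ineq2[of "z1 - z2" "b - a"] \<open>0 \<le> c\<close>
    by (simp add: abs_mult norm_minus_commute mult.commute mult_left_mono)
  finally show "dist (c / 2 * (norm (z1 - a))\<^sup>2 - c / 2 * (norm (z1 - b))\<^sup>2)
      (c / 2 * (norm (z2 - a))\<^sup>2 - c / 2 * (norm (z2 - b))\<^sup>2) \<le> c * norm (a - b) * dist z1 z2"
    by (simp add: dist_real_def dist_norm mult.assoc)
qed (use assms in simp)

section \<open>Proximal steps and Moreau envelopes\<close>

lemma convex_on_argmin_of_proximal_argmin:
  assumes h: "convex_on S h" and a: "a \<in> S"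
    and prox: "\<And>z. z \<in> S \<Longrightarrow> h a \<le> h z + \<mu> / 2 * (norm (z - a))\<^sup>2"
    and z: "z \<in> S"
  shows "h a \<le> h z"
proof -
  define K where "K = \<mu> / 2 * (norm (z - a))\<^sup>2"
  have "h a - h z \<le> 0"
  proof (rule nonpos_of_forall_le_mult)
    fix t :: real assume t: "0 < t" "t \<le> 1"
    define zt where "zt = (1 - t) *\<^sub>R a + t *\<^sub>R z"
    have "zt \<in> S"
      using convex_on_imp_convex[OF h] a z t by (auto simp: zt_def intro: convexD)
    have "zt - a = t *\<^sub>R (z - a)" by (simp add: zt_def algebra_simps)
    then have "\<mu> / 2 * (norm (zt - a))\<^sup>2 = t\<^sup>2 * K" by (simp add: K_def power_mult_distrib)
    then have "h a \<le> h zt + t\<^sup>2 * K" using prox[OF \<open>zt \<in> S\<close>] by simp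
    also have "h zt \<le> (1 - t) * h a + t * h z"
      unfolding zt_def using convex_onD[OF h] a z t by simp
    finally have "t * (h a - h z) \<le> t * (t * K)"
      by (simp add: algebra_simps power2_eq_square)
    then show "h a - h z \<le> t * K" using t by simp
  qed
  then show ?thesis by simp
qed

definition moreau_env :: "('a::real_inner \<Rightarrow> real) \<Rightarrow> 'a set \<Rightarrow> real \<Rightarrow> 'a \<Rightarrow> real" where
  "moreau_env g X \<eta> a = (INF y\<in>X. g y + 1 / (2 * \<eta>) * (norm (y - a))\<^sup>2)"

text \<open>Minimised over U, the right-hand side is the infimal convolution of s |.|^2 and
  |.|^2 / e at D, which equals the left-hand side.\<close>
lemma power2_norm_inf_convolution_le:
  fixes U D :: "'a::real_inner"
  assumes "0 \<le> s" "0 < e"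
  shows "s / (e * s + 1) * (norm D)\<^sup>2 \<le> s * (norm U)\<^sup>2 + (norm (U - D))\<^sup>2 / e"
proof -
  define k where "k = e * s + 1"
  have "0 < k" using assms by (simp add: k_def add_nonneg_pos)
  have "s * (norm U)\<^sup>2 + (norm (U - D))\<^sup>2 / e - s / k * (norm D)\<^sup>2
      = (norm (k *\<^sub>R U - D))\<^sup>2 / (e * k)"
    using \<open>0 < k\<close> \<open>0 < e\<close> unfolding power2_norm_eq_inner
    by (simp add: inner_diff_left inner_diff_right inner_commute field_simps k_def)
      (simp add: algebra_simps)
  also have "\<dots> \<ge> 0" using \<open>0 < k\<close> \<open>0 < e\<close> by simp
  finally show ?thesis by (simp add: k_def)
qed

locale moreau_envelope =
  fixes g :: "'a::{real_inner,heine_borel} \<Rightarrow> real" and X :: "'a set" and \<sigma> \<eta> :: real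
  assumes strongly_convex: "strongly_convex_on X g \<sigma>" and sigma_nonneg: "0 \<le> \<sigma>"
    and eta_pos: "0 < \<eta>" and closed: "closed X" and nonempty: "X \<noteq> {}"
    and continuous: "continuous_on X g"
begin

lemma moreau_env_attained:
  obtains p where "p \<in> X" "moreau_env g X \<eta> a = g p + 1 / (2 * \<eta>) * (norm (p - a))\<^sup>2"
    "\<And>y. y \<in> X \<Longrightarrow> g p + 1 / (2 * \<eta>) * (norm (p - a))\<^sup>2 \<le> g y + 1 / (2 * \<eta>) * (norm (y - a))\<^sup>2"
proof -
  let ?G = "\<lambda>y. g y + 1 / (2 * \<eta>) * (norm (y - a))\<^sup>2"
  have "strongly_convex_on X ?G (\<sigma> + 1 / \<eta>)"
    using strongly_convex_on_add[OF strongly_convex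
        strongly_convex_on_power2_dist[of X "1 / \<eta>" a, OF strongly_convex_on_imp_convex_on
          [OF strongly_convex sigma_nonneg, THEN convex_on_imp_convex]]]
    by (simp add: ac_simps)
  moreover have "continuous_on X ?G" using continuous by (intro continuous_intros)
  moreover have "0 < \<sigma> + 1 / \<eta>" using sigma_nonneg eta_pos by (simp add: add_nonneg_pos)
  ultimately obtain p where p: "p \<in> X" "\<And>y. y \<in> X \<Longrightarrow> ?G p \<le> ?G y"
    using strongly_convex_on_attains_inf closed nonempty by blast
  moreover have "moreau_env g X \<eta> a = ?G p"
    unfolding moreau_env_def
  proof (rule antisym)
    show "(INF y\<in>X. ?G y) \<le> ?G p"
      by (rule cINF_lower[OF bdd_belowI2 \<open>p \<in> X\<close>]) (rule p(2))
    show "?G p \<le> (INF y\<in>X. ?G y)"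
      by (rule cINF_greatest[OF nonempty p(2)])
  qed
  ultimately show ?thesis using that by blast
qed

lemma moreau_env_le: "y \<in> X \<Longrightarrow> moreau_env g X \<eta> a \<le> g y + 1 / (2 * \<eta>) * (norm (y - a))\<^sup>2"
  using moreau_env_attained[of a] by force

lemma moreau_env_le_self: "y \<in> X \<Longrightarrow> moreau_env g X \<eta> y \<le> g y"
  using moreau_env_le[of y y] by simp

lemma moreau_env_ge:
  "(\<And>y. y \<in> X \<Longrightarrow> B \<le> g y + 1 / (2 * \<eta>) * (norm (y - a))\<^sup>2) \<Longrightarrow> B \<le> moreau_env g X \<eta> a"
  unfolding moreau_env_def by (rule cINF_greatest[OF nonempty])

lemma strongly_convex_on_moreau_env:
  assumes "convex S"
  shows "strongly_convex_on S (moreau_env g X \<eta>) (\<sigma> / (\<eta> * \<sigma> + 1))"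
  unfolding strongly_convex_on_def
proof (intro conjI ballI allI impI assms)
  fix a b and t :: real assume t: "0 \<le> t \<and> t \<le> 1"
  let ?E = "moreau_env g X \<eta>"
  obtain pa where pa: "pa \<in> X" "?E a = g pa + 1 / (2 * \<eta>) * (norm (pa - a))\<^sup>2"
    using moreau_env_attained[of a] by blast
  obtain pb where pb: "pb \<in> X" "?E b = g pb + 1 / (2 * \<eta>) * (norm (pb - b))\<^sup>2"
    using moreau_env_attained[of b] by blast
  define P where "P = (norm (pa - pb))\<^sup>2"
  define R where "R = (norm ((pa - pb) - (a - b)))\<^sup>2"
  define A where "A = (norm (pa - a))\<^sup>2"
  define B where "B = (norm (pb - b))\<^sup>2"
  define N where "N = (norm (a - b))\<^sup>2"
  define c where "c = \<sigma> / (\<eta> * \<sigma> + 1)"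
  define ym where "ym = t *\<^sub>R pa + (1 - t) *\<^sub>R pb"
  have "ym \<in> X"
    using strongly_convex pa pb t by (auto simp: strongly_convex_on_def ym_def intro: convexD)
  then have "?E (t *\<^sub>R a + (1 - t) *\<^sub>R b)
      \<le> g ym + 1 / (2 * \<eta>) * (norm (ym - (t *\<^sub>R a + (1 - t) *\<^sub>R b)))\<^sup>2"
    by (rule moreau_env_le)
  also have "(norm (ym - (t *\<^sub>R a + (1 - t) *\<^sub>R b)))\<^sup>2 = t * A + (1 - t) * B - t * (1 - t) * R"
    using power2_norm_convex_combination[of t "pa - a" "pb - b"]
    by (simp add: ym_def A_def B_def R_def algebra_simps)
  also have "g ym \<le> t * g pa + (1 - t) * g pb - \<sigma> / 2 * t * (1 - t) * P"
    using strongly_convex pa pb t unfolding strongly_convex_on_def P_def ym_def by blast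
  also have "t * g pa + (1 - t) * g pb - \<sigma> / 2 * t * (1 - t) * P
        + 1 / (2 * \<eta>) * (t * A + (1 - t) * B - t * (1 - t) * R)
      = t * ?E a + (1 - t) * ?E b - t * (1 - t) * (\<sigma> * P + R / \<eta>) / 2"
    using eta_pos by (simp add: pa pb A_def B_def field_simps)
  also have "\<dots> \<le> t * ?E a + (1 - t) * ?E b - c / 2 * t * (1 - t) * N"
  proof -
    have "t * (1 - t) * (c * N) \<le> t * (1 - t) * (\<sigma> * P + R / \<eta>)"
      using power2_norm_inf_convolution_le[OF sigma_nonneg eta_pos, of "a - b" "pa - pb"] t
      by (intro mult_left_mono) (auto simp: P_def R_def c_def N_def)
    then have "t * (1 - t) * (c * N) / 2 \<le> t * (1 - t) * (\<sigma> * P + R / \<eta>) / 2"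
      by (rule divide_right_mono) simp
    moreover have "c / 2 * t * (1 - t) * N = t * (1 - t) * (c * N) / 2"
      by simp
    ultimately show ?thesis by (intro diff_left_mono) (simp only:)
  qed
  finally show "?E (t *\<^sub>R a + (1 - t) *\<^sub>R b)
      \<le> t * ?E a + (1 - t) * ?E b - \<sigma> / (\<eta> * \<sigma> + 1) / 2 * t * (1 - t) * (norm (a - b))\<^sup>2"
    by (simp add: c_def N_def)
qed

text \<open>If a minimises the envelope, its proximal point p satisfies
  g p + |p - a|^2 / (2\<eta>) = env a \<le> env p \<le> g p, hence p = a.\<close>
lemma argmin_of_moreau_env_argmin:
  assumes min: "\<And>z. z \<in> X \<Longrightarrow> moreau_env g X \<eta> a \<le> moreau_env g X \<eta> z"
  shows "a \<in> X" and "\<And>z. z \<in> X \<Longrightarrow> g a \<le> g z"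
proof -
  obtain p where p: "p \<in> X" "moreau_env g X \<eta> a = g p + 1 / (2 * \<eta>) * (norm (p - a))\<^sup>2"
    using moreau_env_attained[of a] by blast
  have "g p + 1 / (2 * \<eta>) * (norm (p - a))\<^sup>2 \<le> g p"
    using min[OF p(1)] moreau_env_le_self[OF p(1)] p(2) by linarith
  then have "(norm (p - a))\<^sup>2 \<le> 0" using eta_pos by (simp add: divide_le_0_iff)
  then have "p = a" by simp
  with p show "a \<in> X" by simp
  fix z assume "z \<in> X"
  have "g a = moreau_env g X \<eta> a" using p \<open>p = a\<close> by simp
  also have "\<dots> \<le> g z" using min[OF \<open>z \<in> X\<close>] moreau_env_le_self[OF \<open>z \<in> X\<close>] by linarith
  finally show "g a \<le> g z" .
qed

lemma moreau_env_argmin_of_argmin: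
  assumes "a \<in> X" and min: "\<And>z. z \<in> X \<Longrightarrow> g a \<le> g z"
  shows "moreau_env g X \<eta> a \<le> moreau_env g X \<eta> b"
proof -
  have "moreau_env g X \<eta> a \<le> g a" by (rule moreau_env_le_self[OF \<open>a \<in> X\<close>])
  also have "g a \<le> moreau_env g X \<eta> b"
  proof (rule moreau_env_ge)
    fix y assume "y \<in> X"
    have "0 \<le> 1 / (2 * \<eta>) * (norm (y - b))\<^sup>2" using eta_pos by simp
    then show "g a \<le> g y + 1 / (2 * \<eta>) * (norm (y - b))\<^sup>2" using min[OF \<open>y \<in> X\<close>] by linarith
  qed
  finally show ?thesis .
qed

end

section \<open>The game\<close>

locale game =
  fixes blk :: "'n::finite \<Rightarrow> 'p::finite"
    and f :: "'p \<Rightarrow> real^'n \<Rightarrow> real"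
    and Xs :: "'p \<Rightarrow> (real^'n) set"
    and \<sigma> L :: "'p \<Rightarrow> real"
    and \<eta> \<mu> :: real
  assumes X_sub: "\<And>i. Xs i \<subseteq> bsub blk i"
    and X_ne: "\<And>i. Xs i \<noteq> {}"
    and X_closed: "\<And>i. closed (Xs i)"
    and X_convex: "\<And>i. convex (Xs i)"
    and mu_pos: "\<mu> > 0" and eta_pos: "\<eta> > 0"
    and sigma_pos: "\<And>i. \<sigma> i > 0"
    and L_nonneg: "\<And>i. L i \<ge> 0"
    and A1: "\<And>i x. strongly_convex_on (bsub blk i) (\<lambda>z. f i (bupd blk i z x)) (\<sigma> i)
                    \<and> continuous_on (bsub blk i) (\<lambda>z. f i (bupd blk i z x))"
    and A2: "\<And>i x y w. \<exists>g1 g2.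
               GDERIV (\<lambda>v. moreau blk f Xs \<eta> i (bupd blk i v y)) x :> g1 \<and>
               GDERIV (\<lambda>v. moreau blk f Xs \<eta> i (bupd blk i v w)) x :> g2 \<and>
               norm (g1 - g2) \<le> L i * norm (bothers blk i y - bothers blk i w)"
begin

definition cost :: "'p \<Rightarrow> real^'n \<Rightarrow> real^'n \<Rightarrow> real" where
  "cost i x z = f i (bupd blk i z x)"

abbreviation env :: "'p \<Rightarrow> real^'n \<Rightarrow> real^'n \<Rightarrow> real" where
  "env i x \<equiv> moreau_env (cost i x) (Xs i) \<eta>"

definition br_objective :: "'p \<Rightarrow> real^'n \<Rightarrow> real^'n \<Rightarrow> real" where
  "br_objective i x z = env i x z + \<mu> / 2 * (norm (z - bproj blk i x))\<^sup>2"

definition sigma_env :: "'p \<Rightarrow> real" where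
  "sigma_env i = \<sigma> i / (\<eta> * \<sigma> i + 1)"

lemma sigma_env_pos: "0 < sigma_env i"
  using sigma_pos[of i] eta_pos by (simp add: sigma_env_def add_pos_pos)

lemma moreau_envelope_cost: "moreau_envelope (cost i x) (Xs i) (\<sigma> i) \<eta>"
proof
  show "strongly_convex_on (Xs i) (cost i x) (\<sigma> i)"
    using strongly_convex_on_subset[OF conjunct1[OF A1[of i x]] X_sub X_convex]
    by (simp add: cost_def[abs_def])
  show "continuous_on (Xs i) (cost i x)"
    using continuous_on_subset[OF conjunct2[OF A1[of i x]] X_sub] by (simp add: cost_def[abs_def])
qed (use X_ne X_closed eta_pos sigma_pos[of i] in auto)

lemma moreau_bupd: "moreau blk f Xs \<eta> i (bupd blk i z x) = env i x (bproj blk i z)"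
  by (simp add: moreau_def moreau_env_def cost_def)

lemma strongly_convex_env: "strongly_convex_on (bsub blk i) (env i x) (sigma_env i)"
  unfolding sigma_env_def
  by (rule moreau_envelope.strongly_convex_on_moreau_env[OF moreau_envelope_cost convex_bsub])

text \<open>(A2) concerns the envelope as a function on all of R^n, which agrees with env on the block
  subspace.\<close>
lemma lipschitz_on_env_diff:
  "(L i * norm (bothers blk i y - bothers blk i w))-lipschitz_on (bsub blk i) (\<lambda>z. env i y z - env i w z)"
proof (rule lipschitz_onI)
  define K where "K = L i * norm (bothers blk i y - bothers blk i w)"
  let ?E = "\<lambda>x v. moreau blk f Xs \<eta> i (bupd blk i v x)"
  have "\<forall>v. \<exists>g. ((\<lambda>v. ?E y v - ?E w v) has_derivative (\<lambda>h. h \<bullet> g)) (at v) \<and> norm g \<le> K"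
  proof
    fix v
    obtain g1 g2 where "GDERIV (?E y) v :> g1" "GDERIV (?E w) v :> g2" "norm (g1 - g2) \<le> K"
      using A2[where i = i and x = v and y = y and w = w] by (auto simp: K_def)
    then show "\<exists>g. ((\<lambda>v. ?E y v - ?E w v) has_derivative (\<lambda>h. h \<bullet> g)) (at v) \<and> norm g \<le> K"
      unfolding gderiv_def
      by (intro exI[of _ "g1 - g2"]) (auto dest: has_derivative_diff simp: inner_diff_right)
  qed
  then obtain G where G: "\<forall>v. ((\<lambda>v. ?E y v - ?E w v) has_derivative (\<lambda>h. h \<bullet> G v)) (at v)
      \<and> norm (G v) \<le> K"
    using choice[of "\<lambda>v g. ((\<lambda>v. ?E y v - ?E w v) has_derivative (\<lambda>h. h \<bullet> g)) (at v) \<and> norm g \<le> K"]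
    by blast
  have "onorm (\<lambda>h. h \<bullet> G v) \<le> norm (G v)" for v
    by (rule onorm_le) (metis Cauchy_Schwarz_ineq2 mult.commute real_norm_def)
  then have "onorm (\<lambda>h. h \<bullet> G v) \<le> K" for v
    using G by (meson order_trans)
  then have bound: "norm ((?E y a - ?E w a) - (?E y b - ?E w b)) \<le> K * norm (a - b)" for a b
    by (intro differentiable_bound[OF convex_UNIV]) (use G in \<open>auto intro: has_derivative_at_withinI\<close>)
  show "dist (env i y a - env i w a) (env i y b - env i w b) \<le> K * dist a b"
    if "a \<in> bsub blk i" "b \<in> bsub blk i" for a b
    using bound[of a b] that by (simp add: moreau_bupd bproj_bsub dist_real_def dist_norm)
qed (use L_nonneg in simp)

lemma continuous_on_env: "continuous_on (bsub blk i) (env i x)"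
proof -
  have "(\<lambda>v. moreau blk f Xs \<eta> i (bupd blk i v x)) differentiable (at v)" for v
    using A2[where i = i and x = v and y = x and w = x] unfolding gderiv_def differentiable_def by blast
  then have "continuous_on (bsub blk i) (\<lambda>v. moreau blk f Xs \<eta> i (bupd blk i v x))"
    by (intro continuous_at_imp_continuous_on ballI differentiable_imp_continuous_within)
  then show ?thesis
    by (rule continuous_on_cong[THEN iffD1, rotated 2]) (auto simp: moreau_bupd bproj_bsub)
qed

lemma strongly_convex_br_objective:
  "strongly_convex_on (bsub blk i) (br_objective i x) (sigma_env i + \<mu>)"
  unfolding br_objective_def
  by (intro strongly_convex_on_add strongly_convex_env strongly_convex_on_power2_dist convex_bsub)

lemma ex1_argmin_br_objective:
  "\<exists>!z. z \<in> bsub blk i \<and> (\<forall>z'\<in>bsub blk i. br_objective i x z \<le> br_objective i x z')"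
proof (rule strongly_convex_on_ex1_argmin[OF strongly_convex_br_objective])
  show "0 < sigma_env i + \<mu>" using sigma_env_pos mu_pos by (simp add: add_pos_pos)
  show "continuous_on (bsub blk i) (br_objective i x)"
    unfolding br_objective_def by (intro continuous_intros continuous_on_env)
  show "bsub blk i \<noteq> {}" by (metis bproj_in_bsub empty_iff)
qed (rule closed_bsub)

lemma bresp_eq_The_argmin:
  "bresp blk f Xs \<eta> \<mu> i x
    = (THE z. z \<in> bsub blk i \<and> (\<forall>z'\<in>bsub blk i. br_objective i x z \<le> br_objective i x z'))"
  unfolding bresp_def br_objective_def
  by (rule arg_cong[where f = The]) (auto simp: fun_eq_iff moreau_bupd bproj_bsub)

lemma bresp_argmin:
  shows bresp_in_bsub: "bresp blk f Xs \<eta> \<mu> i x \<in> bsub blk i"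
    and bresp_le: "z \<in> bsub blk i \<Longrightarrow> br_objective i x (bresp blk f Xs \<eta> \<mu> i x) \<le> br_objective i x z"
  using theI'[OF ex1_argmin_br_objective[of i x]] unfolding bresp_eq_The_argmin[symmetric] by blast+

lemma bresp_eqI:
  assumes "z \<in> bsub blk i" "\<And>z'. z' \<in> bsub blk i \<Longrightarrow> br_objective i x z \<le> br_objective i x z'"
  shows "bresp blk f Xs \<eta> \<mu> i x = z"
  unfolding bresp_eq_The_argmin using assms by (intro the1_equality[OF ex1_argmin_br_objective]) blast

lemma bresp_dist_le:
  "(sigma_env i + \<mu>) * norm (bresp blk f Xs \<eta> \<mu> i y - bresp blk f Xs \<eta> \<mu> i w)
     \<le> \<mu> * norm (bproj blk i y - bproj blk i w) + L i * norm (bothers blk i y - bothers blk i w)"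
proof -
  have "(L i * norm (bothers blk i y - bothers blk i w) + \<mu> * norm (bproj blk i y - bproj blk i w))
      -lipschitz_on (bsub blk i) (\<lambda>z. br_objective i y z - br_objective i w z)"
    using lipschitz_on_add[OF lipschitz_on_env_diff
        lipschitz_on_power2_dist_diff[of \<mu> "bproj blk i y" "bproj blk i w"]] mu_pos
    by (simp add: br_objective_def algebra_simps)
  then show ?thesis
    using strongly_convex_on_argmin_dist_le[OF strongly_convex_br_objective strongly_convex_br_objective
        _ bresp_in_bsub bresp_le bresp_in_bsub bresp_le] sigma_env_pos mu_pos
    by (simp add: dist_norm add_pos_pos algebra_simps)
qed

lemma sum_Gamma1_row:
  "(\<Sum>j\<in>UNIV. Gamma1 \<eta> \<mu> \<sigma> L $ i $ j * n j)
    = (\<mu> * n i + L i * (\<Sum>j\<in>UNIV-{i}. n j)) / (sigma_env i + \<mu>)"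
proof -
  have "(\<Sum>j\<in>UNIV. Gamma1 \<eta> \<mu> \<sigma> L $ i $ j * n j)
      = Gamma1 \<eta> \<mu> \<sigma> L $ i $ i * n i + (\<Sum>j\<in>UNIV-{i}. Gamma1 \<eta> \<mu> \<sigma> L $ i $ j * n j)"
    by (simp add: sum.remove)
  also have "(\<Sum>j\<in>UNIV-{i}. Gamma1 \<eta> \<mu> \<sigma> L $ i $ j * n j) = (\<Sum>j\<in>UNIV-{i}. L i / (sigma_env i + \<mu>) * n j)"
    by (rule sum.cong) (auto simp: Gamma1_def sigma_env_def)
  finally show ?thesis
    by (simp add: Gamma1_def sigma_env_def add_divide_distrib sum_distrib_left sum_divide_distrib)
qed

lemma bresp_dist_le_Gamma1:
  "norm (bresp blk f Xs \<eta> \<mu> i y - bresp blk f Xs \<eta> \<mu> i w)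
     \<le> (\<Sum>j\<in>UNIV. Gamma1 \<eta> \<mu> \<sigma> L $ i $ j * norm (bproj blk j y - bproj blk j w))"
proof -
  have "norm (bothers blk i y - bothers blk i w) \<le> (\<Sum>j\<in>UNIV-{i}. norm (bproj blk j y - bproj blk j w))"
    using norm_bothers_le[of blk i "y - w"] by (simp add: bothers_diff bproj_diff)
  then have "L i * norm (bothers blk i y - bothers blk i w)
      \<le> L i * (\<Sum>j\<in>UNIV-{i}. norm (bproj blk j y - bproj blk j w))"
    by (rule mult_left_mono[OF _ L_nonneg])
  then have "(sigma_env i + \<mu>) * norm (bresp blk f Xs \<eta> \<mu> i y - bresp blk f Xs \<eta> \<mu> i w)
      \<le> \<mu> * norm (bproj blk i y - bproj blk i w)
        + L i * (\<Sum>j\<in>UNIV-{i}. norm (bproj blk j y - bproj blk j w))"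
    using bresp_dist_le[of i y w] by linarith
  moreover have "0 < sigma_env i + \<mu>" using sigma_env_pos mu_pos by (simp add: add_pos_pos)
  ultimately show ?thesis
    unfolding sum_Gamma1_row by (simp add: field_simps)
qed

lemma bproj_xhat: "bproj blk i (xhat blk f Xs \<eta> \<mu> x) = bresp blk f Xs \<eta> \<mu> i x"
  using bresp_in_bsub[of i x] by (auto simp: bproj_def xhat_def bsub_def vec_eq_iff)

text \<open>The vector of block distances of the images is dominated componentwise by Gamma1 applied
  to that of the arguments; both are nonnegative, so the bound passes to Euclidean norms.\<close>
lemma norm_xhat_diff_le:
  "norm (xhat blk f Xs \<eta> \<mu> y - xhat blk f Xs \<eta> \<mu> w)
     \<le> onorm (\<lambda>v. Gamma1 \<eta> \<mu> \<sigma> L *v v) * norm (y - w)"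
proof -
  define dv where "dv = (\<chi> j. norm (bproj blk j (y - w)))"
  define av where "av = (\<chi> j. norm (bproj blk j (xhat blk f Xs \<eta> \<mu> y - xhat blk f Xs \<eta> \<mu> w)))"
  have "av $ i \<le> (Gamma1 \<eta> \<mu> \<sigma> L *v dv) $ i" for i
    using bresp_dist_le_Gamma1[of i y w]
    by (simp add: av_def dv_def matrix_vector_mult_def bproj_diff bproj_xhat)
  then have "norm av \<le> norm (Gamma1 \<eta> \<mu> \<sigma> L *v dv)"
    by (intro norm_le_componentwise_cart) (simp add: av_def abs_le_iff order_trans[OF _ abs_ge_self])
  also have "\<dots> \<le> onorm (\<lambda>v. Gamma1 \<eta> \<mu> \<sigma> L *v v) * norm dv"
    by (rule onorm) simp
  finally show ?thesis
    using starnorm_eq_norm[of blk] by (simp add: starnorm_def av_def dv_def)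
qed

lemma continuous_on_xhat: "continuous_on S (xhat blk f Xs \<eta> \<mu>)"
proof (rule lipschitz_on_continuous_on)
  show "(onorm (\<lambda>v. Gamma1 \<eta> \<mu> \<sigma> L *v v))-lipschitz_on S (xhat blk f Xs \<eta> \<mu>)"
    using norm_xhat_diff_le by (intro lipschitz_onI) (auto simp: dist_norm intro: onorm_pos_le)
qed

lemma xhat_fixed_iff: "xhat blk f Xs \<eta> \<mu> x = x \<longleftrightarrow> (\<forall>i. bresp blk f Xs \<eta> \<mu> i x = bproj blk i x)"
proof
  show "xhat blk f Xs \<eta> \<mu> x = x \<Longrightarrow> \<forall>i. bresp blk f Xs \<eta> \<mu> i x = bproj blk i x"
    by (metis bproj_xhat)
  show "\<forall>i. bresp blk f Xs \<eta> \<mu> i x = bproj blk i x \<Longrightarrow> xhat blk f Xs \<eta> \<mu> x = x"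
    by (simp add: vec_eq_iff xhat_def bproj_def)
qed

lemma bresp_eq_bproj_iff:
  "bresp blk f Xs \<eta> \<mu> i x = bproj blk i x
    \<longleftrightarrow> bproj blk i x \<in> Xs i \<and> (\<forall>z\<in>Xs i. f i x \<le> f i (bupd blk i z x))"
proof -
  interpret E: moreau_envelope "cost i x" "Xs i" "\<sigma> i" \<eta> by (rule moreau_envelope_cost)
  let ?xi = "bproj blk i x"
  show ?thesis
  proof
    assume "bresp blk f Xs \<eta> \<mu> i x = ?xi"
    then have prox: "env i x ?xi \<le> env i x z + \<mu> / 2 * (norm (z - ?xi))\<^sup>2" if "z \<in> bsub blk i" for z
      using bresp_le[OF that, of x] by (simp add: br_objective_def)
    have "convex_on (bsub blk i) (env i x)"
      using strongly_convex_on_imp_convex_on[OF strongly_convex_env] sigma_env_pos less_imp_le by blast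
    then have "env i x ?xi \<le> env i x z" if "z \<in> Xs i" for z
      using convex_on_argmin_of_proximal_argmin[OF _ bproj_in_bsub prox] that X_sub by blast
    note argmin = E.argmin_of_moreau_env_argmin[OF this]
    show "?xi \<in> Xs i \<and> (\<forall>z\<in>Xs i. f i x \<le> f i (bupd blk i z x))"
      using argmin by (simp add: cost_def)
  next
    assume "?xi \<in> Xs i \<and> (\<forall>z\<in>Xs i. f i x \<le> f i (bupd blk i z x))"
    then have "env i x ?xi \<le> env i x z" for z
      by (intro E.moreau_env_argmin_of_argmin) (auto simp: cost_def)
    then show "bresp blk f Xs \<eta> \<mu> i x = ?xi"
      using mu_pos by (intro bresp_eqI) (auto simp: br_objective_def intro: add_increasing2)
  qed
qed

lemma xhat_fixed_iff_nash: "xhat blk f Xs \<eta> \<mu> x = x \<longleftrightarrow> nash blk f Xs x"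
  unfolding xhat_fixed_iff nash_def bresp_eq_bproj_iff by blast

end

section \<open>Iterations with summable errors\<close>

lemma summable_of_le_contraction_plus_summable:
  fixes a b :: "nat \<Rightarrow> real"
  assumes a: "\<And>k. 0 \<le> a k" and b: "\<And>k. 0 \<le> b k" "summable b"
    and q: "0 \<le> q" "q < 1" and rec: "\<And>k. a (Suc k) \<le> q * a k + b k"
  shows "summable a"
proof (rule summableI_nonneg_bounded[OF a])
  fix n
  have "(\<Sum>k<n. a k) \<le> (\<Sum>k<Suc n. a k)" using a[of n] by simp
  also have "\<dots> = a 0 + (\<Sum>k<n. a (Suc k))" by (rule sum.lessThan_Suc_shift)
  also have "\<dots> \<le> a 0 + (q * (\<Sum>k<n. a k) + (\<Sum>k<n. b k))"
    using sum_mono[of "{..<n}" "\<lambda>k. a (Suc k)" "\<lambda>k. q * a k + b k"] rec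
    by (simp add: sum.distrib sum_distrib_left)
  also have "(\<Sum>k<n. b k) \<le> suminf b" by (rule sum_le_suminf) (use b in auto)
  finally have "(1 - q) * (\<Sum>k<n. a k) \<le> a 0 + suminf b" by (simp add: algebra_simps)
  then show "(\<Sum>k<n. a k) \<le> (a 0 + suminf b) / (1 - q)" using q by (simp add: field_simps)
qed

lemma tendsto_fixpoint_of_summable_errors:
  fixes T :: "'a::real_normed_vector \<Rightarrow> 'a"
  assumes q: "0 \<le> q" "q < 1" and contraction: "\<And>y w. norm (T y - T w) \<le> q * norm (y - w)"
    and fixpoint: "T s = s" and errors: "summable (\<lambda>k. norm (x (Suc k) - T (x k)))"
  shows "x \<longlonglongrightarrow> s"
proof -
  have "summable (\<lambda>k. norm (x k - s))"
  proof (rule summable_of_le_contraction_plus_summable[OF _ _ errors q])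
    fix k
    have "norm (x (Suc k) - s) \<le> norm (x (Suc k) - T (x k)) + norm (T (x k) - T s)"
      using norm_triangle_ineq[of "x (Suc k) - T (x k)" "T (x k) - T s"] fixpoint by simp
    then show "norm (x (Suc k) - s) \<le> q * norm (x k - s) + norm (x (Suc k) - T (x k))"
      using contraction[of "x k" s] by simp
  qed simp_all
  then have "(\<lambda>k. norm (x k - s)) \<longlonglongrightarrow> 0" by (rule summable_LIMSEQ_zero)
  then show ?thesis by (simp add: tendsto_norm_zero_iff LIM_zero_iff)
qed

lemma subalgebra_vimage_algebra:
  "X \<in> measurable M N \<Longrightarrow> subalgebra M (vimage_algebra (space M) X N)"
  unfolding subalgebra_def measurable_iff_sets by simp

lemma (in prob_space) nn_integral_le_of_AE_nn_cond_exp_le: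
  assumes "subalgebra M F" and h: "h \<in> borel_measurable M"
    and bound: "AE \<omega> in M. nn_cond_exp M F h \<omega> \<le> c"
  shows "(\<integral>\<^sup>+\<omega>. h \<omega> \<partial>M) \<le> c"
proof -
  interpret F: finite_measure_subalgebra M F by unfold_locales (rule assms(1))
  have "(\<integral>\<^sup>+\<omega>. h \<omega> \<partial>M) = (\<integral>\<^sup>+\<omega>. nn_cond_exp M F h \<omega> \<partial>M)"
    using F.nn_cond_exp_intg[of "\<lambda>_. 1" h] h by simp
  also have "\<dots> \<le> (\<integral>\<^sup>+\<omega>. c \<partial>M)" using bound by (rule nn_integral_mono_AE)
  also have "\<dots> = c" by (simp add: emeasure_space_1)
  finally show ?thesis .
qed

text \<open>A Jensen-type bound, proved through D \<le> D^2 / (2c) + c / 2 for every c > e.\<close>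
lemma (in prob_space) nn_integral_le_of_nn_integral_power2_le:
  assumes D: "D \<in> borel_measurable M" and "0 \<le> e"
    and sq: "(\<integral>\<^sup>+\<omega>. ennreal ((D \<omega>)\<^sup>2) \<partial>M) \<le> ennreal (e\<^sup>2)"
  shows "(\<integral>\<^sup>+\<omega>. ennreal (D \<omega>) \<partial>M) \<le> ennreal e"
proof (rule ennreal_le_epsilon)
  fix \<epsilon> :: real assume "0 < \<epsilon>"
  define c where "c = e + \<epsilon>"
  have "0 < c" "e \<le> c" using \<open>0 \<le> e\<close> \<open>0 < \<epsilon>\<close> by (auto simp: c_def)
  have "ennreal (D \<omega>) \<le> ennreal (1 / (2 * c)) * ennreal ((D \<omega>)\<^sup>2) + ennreal (c / 2)" for \<omega>
  proof -
    have "2 * c * D \<omega> \<le> (D \<omega>)\<^sup>2 + c\<^sup>2"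
      using zero_le_power2[of "D \<omega> - c"] by (simp add: power2_eq_square algebra_simps)
    then have "D \<omega> \<le> 1 / (2 * c) * (D \<omega>)\<^sup>2 + c / 2"
      using \<open>0 < c\<close> by (simp add: field_simps power2_eq_square)
    then show ?thesis
      using \<open>0 < c\<close> by (simp add: ennreal_leI flip: ennreal_plus ennreal_mult)
  qed
  then have "(\<integral>\<^sup>+\<omega>. ennreal (D \<omega>) \<partial>M)
      \<le> (\<integral>\<^sup>+\<omega>. ennreal (1 / (2 * c)) * ennreal ((D \<omega>)\<^sup>2) + ennreal (c / 2) \<partial>M)"
    by (intro nn_integral_mono)
  also have "\<dots> = ennreal (1 / (2 * c)) * (\<integral>\<^sup>+\<omega>. ennreal ((D \<omega>)\<^sup>2) \<partial>M) + ennreal (c / 2)"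
    using D by (subst nn_integral_add) (auto simp: nn_integral_cmult emeasure_space_1)
  also have "\<dots> \<le> ennreal (1 / (2 * c)) * ennreal (e\<^sup>2) + ennreal (c / 2)"
    by (intro add_mono mult_left_mono sq) auto
  also have "\<dots> = ennreal (e\<^sup>2 / (2 * c) + c / 2)"
    using \<open>0 < c\<close> by (simp add: ennreal_plus ennreal_mult[symmetric])
  also have "\<dots> \<le> ennreal c"
  proof (rule ennreal_leI)
    have "e\<^sup>2 \<le> c\<^sup>2" using \<open>0 \<le> e\<close> \<open>e \<le> c\<close> by (simp add: power_mono)
    then show "e\<^sup>2 / (2 * c) + c / 2 \<le> c"
      using \<open>0 < c\<close> by (simp add: field_simps power2_eq_square)
  qed
  finally show "(\<integral>\<^sup>+\<omega>. ennreal (D \<omega>) \<partial>M) \<le> ennreal e + ennreal \<epsilon>"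
    using \<open>0 \<le> e\<close> \<open>0 < \<epsilon>\<close> by (simp add: c_def ennreal_plus)
qed

lemma AE_summable_of_summable_nn_integral:
  fixes D :: "nat \<Rightarrow> 'a \<Rightarrow> real"
  assumes D: "\<And>k. D k \<in> borel_measurable M" "\<And>k \<omega>. 0 \<le> D k \<omega>"
    and bound: "\<And>k. (\<integral>\<^sup>+\<omega>. ennreal (D k \<omega>) \<partial>M) \<le> ennreal (e k)"
    and e: "\<And>k. 0 \<le> e k" "summable e"
  shows "AE \<omega> in M. summable (\<lambda>k. D k \<omega>)"
proof -
  note [measurable] = D(1)
  have "(\<integral>\<^sup>+\<omega>. (\<Sum>k. ennreal (D k \<omega>)) \<partial>M) = (\<Sum>k. \<integral>\<^sup>+\<omega>. ennreal (D k \<omega>) \<partial>M)"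
    by (rule nn_integral_suminf) measurable
  also have "\<dots> \<le> (\<Sum>k. ennreal (e k))" by (intro suminf_le bound) auto
  also have "\<dots> = ennreal (suminf e)" using e by (intro suminf_ennreal2) auto
  finally have "(\<integral>\<^sup>+\<omega>. (\<Sum>k. ennreal (D k \<omega>)) \<partial>M) \<noteq> \<infinity>"
    using top.extremum_uniqueI by fastforce
  then have "AE \<omega> in M. (\<Sum>k. ennreal (D k \<omega>)) \<noteq> \<infinity>"
    by (intro nn_integral_PInf_AE) measurable
  then show ?thesis
    by eventually_elim (rule summable_suminf_not_top, auto simp: D(2))
qed

context game
begin

lemma borel_measurable_bresp: "bresp blk f Xs \<eta> \<mu> i \<in> borel_measurable borel"
proof -
  have "bresp blk f Xs \<eta> \<mu> i = bproj blk i \<circ> xhat blk f Xs \<eta> \<mu>"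
    by (simp add: fun_eq_iff bproj_xhat)
  then show ?thesis
    by (simp only:) (intro borel_measurable_continuous_onI continuous_on_compose continuous_on_xhat
        continuous_on_bproj)
qed

lemma AE_summable_best_response_errors:
  fixes M :: "'w measure" and X :: "nat \<Rightarrow> 'w \<Rightarrow> real^'n" and \<epsilon> :: "'p \<Rightarrow> nat \<Rightarrow> real"
  assumes "prob_space M" and X_meas: "\<And>k. X k \<in> borel_measurable M"
    and cond: "\<And>k. AE \<omega> in M.
              nn_cond_exp M (vimage_algebra (space M) (X k) borel)
                 (\<lambda>\<omega>'. ennreal ((norm (bproj blk i (X (Suc k) \<omega>') - bresp blk f Xs \<eta> \<mu> i (X k \<omega>')))\<^sup>2)) \<omega>
              \<le> ennreal ((\<epsilon> i k)\<^sup>2)"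
    and eps: "\<And>k. 0 \<le> \<epsilon> i k" "summable (\<epsilon> i)"
  shows "AE \<omega> in M. summable (\<lambda>k. norm (bproj blk i (X (Suc k) \<omega>) - bresp blk f Xs \<eta> \<mu> i (X k \<omega>)))"
proof -
  interpret prob_space M by fact
  define D where "D k \<omega> = norm (bproj blk i (X (Suc k) \<omega>) - bresp blk f Xs \<eta> \<mu> i (X k \<omega>))" for k \<omega>
  note [measurable] =
    X_meas borel_measurable_bresp borel_measurable_continuous_onI[OF continuous_on_bproj]
  have D_meas [measurable]: "D k \<in> borel_measurable M" for k
    unfolding D_def by measurable
  have "(\<integral>\<^sup>+\<omega>. ennreal (D k \<omega>) \<partial>M) \<le> ennreal (\<epsilon> i k)" for k
  proof (rule nn_integral_le_of_nn_integral_power2_le[OF D_meas eps(1)])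
    show "(\<integral>\<^sup>+\<omega>. ennreal ((D k \<omega>)\<^sup>2) \<partial>M) \<le> ennreal ((\<epsilon> i k)\<^sup>2)"
      unfolding D_def
      by (rule nn_integral_le_of_AE_nn_cond_exp_le[OF subalgebra_vimage_algebra[OF X_meas] _ cond])
        measurable
  qed
  then show ?thesis
    unfolding D_def[symmetric]
    by (intro AE_summable_of_summable_nn_integral[OF D_meas _ _ eps]) (auto simp: D_def)
qed

lemma AE_tendsto_of_inexact_best_responses:
  fixes M :: "'w measure" and X :: "nat \<Rightarrow> 'w \<Rightarrow> real^'n" and \<epsilon> :: "'p \<Rightarrow> nat \<Rightarrow> real"
  assumes A3: "onorm (\<lambda>v. Gamma1 \<eta> \<mu> \<sigma> L *v v) < 1"
    and "prob_space M" and X_meas: "\<And>k. X k \<in> borel_measurable M"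
    and cond: "\<And>k i. AE \<omega> in M.
              nn_cond_exp M (vimage_algebra (space M) (X k) borel)
                 (\<lambda>\<omega>'. ennreal ((norm (bproj blk i (X (Suc k) \<omega>') - bresp blk f Xs \<eta> \<mu> i (X k \<omega>')))\<^sup>2)) \<omega>
              \<le> ennreal ((\<epsilon> i k)\<^sup>2)"
    and eps: "\<And>i k. 0 \<le> \<epsilon> i k" "\<And>i. summable (\<epsilon> i)"
    and fixpoint: "xhat blk f Xs \<eta> \<mu> xs = xs"
  shows "AE \<omega> in M. (\<lambda>k. X k \<omega>) \<longlonglongrightarrow> xs"
proof -
  define D where "D i k \<omega> = norm (bproj blk i (X (Suc k) \<omega>) - bresp blk f Xs \<eta> \<mu> i (X k \<omega>))" for i k \<omega>
  have "AE \<omega> in M. \<forall>i\<in>UNIV. summable (\<lambda>k. D i k \<omega>)"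
    unfolding D_def
    by (intro AE_finite_allI AE_summable_best_response_errors[OF \<open>prob_space M\<close> X_meas cond eps]) auto
  then show ?thesis
  proof eventually_elim
    case (elim \<omega>)
    have "D i k \<omega> = norm (bproj blk i (X (Suc k) \<omega> - xhat blk f Xs \<eta> \<mu> (X k \<omega>)))" for i k
      unfolding D_def bproj_diff bproj_xhat ..
    then have bound: "norm (norm (X (Suc k) \<omega> - xhat blk f Xs \<eta> \<mu> (X k \<omega>))) \<le> (\<Sum>i\<in>UNIV. D i k \<omega>)"
      for k
      using norm_le_sum_norm_bproj[of "X (Suc k) \<omega> - xhat blk f Xs \<eta> \<mu> (X k \<omega>)" blk] by simp
    have "summable (\<lambda>k. \<Sum>i\<in>UNIV. D i k \<omega>)"
      using elim by (intro summable_sum) blast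
    then have "summable (\<lambda>k. norm (X (Suc k) \<omega> - xhat blk f Xs \<eta> \<mu> (X k \<omega>)))"
      by (rule summable_comparison_test[rotated]) (intro exI[of _ 0] allI impI bound)
    moreover have "0 \<le> onorm (\<lambda>v. Gamma1 \<eta> \<mu> \<sigma> L *v v)"
      by (rule onorm_pos_le[OF matrix_vector_mul_bounded_linear])
    ultimately show "(\<lambda>k. X k \<omega>) \<longlonglongrightarrow> xs"
      by (rule tendsto_fixpoint_of_summable_errors[OF _ A3 norm_xhat_diff_le fixpoint, rotated])
  qed
qed

end

theorem theorem3p2:
  fixes blk :: "'n::finite \<Rightarrow> 'p::finite"
    and f :: "'p \<Rightarrow> real^'n \<Rightarrow> real"
    and Xs :: "'p \<Rightarrow> (real^'n) set"
    and \<sigma> L :: "'p \<Rightarrow> real"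
    and \<eta> \<mu> :: real
  assumes blk_surj: "surj blk"
    and X_sub: "\<And>i. Xs i \<subseteq> bsub blk i"
    and X_ne: "\<And>i. Xs i \<noteq> {}"
    and X_closed: "\<And>i. closed (Xs i)"
    and X_convex: "\<And>i. convex (Xs i)"
    and mu_pos: "\<mu> > 0" and eta_pos: "\<eta> > 0"
    and sigma_pos: "\<And>i. \<sigma> i > 0"
    and L_nonneg: "\<And>i. L i \<ge> 0"
    and A1: "\<And>i x. strongly_convex_on (bsub blk i) (\<lambda>z. f i (bupd blk i z x)) (\<sigma> i)
                    \<and> continuous_on (bsub blk i) (\<lambda>z. f i (bupd blk i z x))"
    and A2: "\<And>i x y w. \<exists>g1 g2.
               GDERIV (\<lambda>v. moreau blk f Xs \<eta> i (bupd blk i v y)) x :> g1 \<and>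
               GDERIV (\<lambda>v. moreau blk f Xs \<eta> i (bupd blk i v w)) x :> g2 \<and>
               norm (g1 - g2) \<le> L i * norm (bothers blk i y - bothers blk i w)"
    and A3: "onorm (\<lambda>v. Gamma1 \<eta> \<mu> \<sigma> L *v v) < 1"
  shows
    "(\<forall>y w. \<forall>i. norm (bresp blk f Xs \<eta> \<mu> i y - bresp blk f Xs \<eta> \<mu> i w)
                  \<le> (\<Sum>j\<in>UNIV. Gamma1 \<eta> \<mu> \<sigma> L $ i $ j * norm (bproj blk j y - bproj blk j w)))
     \<and> (\<exists>q. 0 \<le> q \<and> q < 1 \<and> (\<forall>y w. starnorm blk (xhat blk f Xs \<eta> \<mu> y - xhat blk f Xs \<eta> \<mu> w)
                                        \<le> q * starnorm blk (y - w)))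
     \<and> (\<exists>!x. xhat blk f Xs \<eta> \<mu> x = x)
     \<and> (\<forall>x. xhat blk f Xs \<eta> \<mu> x = x \<longleftrightarrow> nash blk f Xs x)
     \<and> (\<exists>!x. nash blk f Xs x)
     \<and> (\<forall>(M :: 'w measure) (X :: nat \<Rightarrow> 'w \<Rightarrow> real^'n) (\<epsilon> :: 'p \<Rightarrow> nat \<Rightarrow> real) x0 xs.
          prob_space M \<longrightarrow>
          (\<forall>k. X k \<in> borel_measurable M) \<longrightarrow>
          (\<forall>i. bproj blk i x0 \<in> Xs i) \<longrightarrow>
          (\<forall>\<omega>\<in>space M. X 0 \<omega> = x0) \<longrightarrow>
          (\<forall>k i. \<forall>\<omega>\<in>space M. bproj blk i (X (Suc k) \<omega>) \<in> Xs i) \<longrightarrow>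
          (\<forall>k i. AE \<omega> in M.
              nn_cond_exp M (vimage_algebra (space M) (X k) borel)
                 (\<lambda>\<omega>'. ennreal ((norm (bproj blk i (X (Suc k) \<omega>') - bresp blk f Xs \<eta> \<mu> i (X k \<omega>')))\<^sup>2)) \<omega>
              \<le> ennreal ((\<epsilon> i k)\<^sup>2)) \<longrightarrow>
          (\<forall>i k. \<epsilon> i k \<ge> 0) \<longrightarrow>
          (\<forall>i. summable (\<epsilon> i)) \<longrightarrow>
          xhat blk f Xs \<eta> \<mu> xs = xs \<longrightarrow>
          (AE \<omega> in M. (\<lambda>k. X k \<omega>) \<longlonglongrightarrow> xs))"
proof -
  interpret game blk f Xs \<sigma> L \<eta> \<mu>
    using X_sub X_ne X_closed X_convex mu_pos eta_pos sigma_pos L_nonneg A1 A2 by unfold_locales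
  define q where "q = onorm (\<lambda>v. Gamma1 \<eta> \<mu> \<sigma> L *v v)"
  have q: "0 \<le> q" "q < 1"
    using A3 onorm_pos_le[OF matrix_vector_mul_bounded_linear] by (simp_all add: q_def)
  have contraction: "norm (xhat blk f Xs \<eta> \<mu> y - xhat blk f Xs \<eta> \<mu> w) \<le> q * norm (y - w)" for y w
    unfolding q_def by (rule norm_xhat_diff_le)
  have unique_fixpoint: "\<exists>!x. xhat blk f Xs \<eta> \<mu> x = x"
    by (rule banach_fix_type[OF q]) (simp add: dist_norm contraction)
  show ?thesis
  proof (intro conjI allI impI)
    show "\<exists>q. 0 \<le> q \<and> q < 1 \<and> (\<forall>y w. starnorm blk (xhat blk f Xs \<eta> \<mu> y - xhat blk f Xs \<eta> \<mu> w)
        \<le> q * starnorm blk (y - w))"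
      using q contraction by (auto simp: starnorm_eq_norm)
    show "\<exists>!x. nash blk f Xs x"
      using unique_fixpoint by (simp add: xhat_fixed_iff_nash)
    show "xhat blk f Xs \<eta> \<mu> x = x \<longleftrightarrow> nash blk f Xs x" for x
      by (rule xhat_fixed_iff_nash)
    show "AE \<omega> in M. (\<lambda>k. X k \<omega>) \<longlonglongrightarrow> xs"
      if "prob_space M" "\<forall>k. X k \<in> borel_measurable M"
        and "\<forall>k i. AE \<omega> in M.
              nn_cond_exp M (vimage_algebra (space M) (X k) borel)
                 (\<lambda>\<omega>'. ennreal ((norm (bproj blk i (X (Suc k) \<omega>') - bresp blk f Xs \<eta> \<mu> i (X k \<omega>')))\<^sup>2)) \<omega>
              \<le> ennreal ((\<epsilon> i k)\<^sup>2)"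
        and "\<forall>i k. \<epsilon> i k \<ge> 0" "\<forall>i. summable (\<epsilon> i)" "xhat blk f Xs \<eta> \<mu> xs = xs"
      for M :: "'w measure" and X \<epsilon> xs
      using that by (intro AE_tendsto_of_inexact_best_responses[OF A3]) auto
  qed (fact unique_fixpoint | rule bresp_dist_le_Gamma1)+
qed

end
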